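(* For all integers $k\ge 1$ and $n\ge \max(k,2)$, $$G_k(n) > 2^n\left(2^{\binom nk}-n\,2^{\binom{n-1}{k}}\right).$$ More precisely: for each choice of literals $y_i\in\{x_i,\bar x_i\}$ ($i=1,\dots,n$), every nonempty set of $k$-clauses, each built only from literals among $y_1,\dots,y_n$, and such that every $y_i$ occurs in some clause, defines a $k$-SAT function, and distinct pairs (choice of $(y_i)$, such set of clauses) define distinct functions.
   Context: Variables $X_n=\{x_1,\dots,x_n\}$; literals $x_i$ and $\bar x_i$. A $k$-clause is a conjunction of $k$ literals on $k$ distinct variables; a $k$-SAT formula is a disjunction of $k$-clauses, and the Boolean functions so defined are $k$-SAT functions. $G_k(n)$ is the number of $k$-SAT functions of $n$ variables. *)

theory Defs
  imports "HOL-Library.FuncSet"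
begin

text \<open>Variables x_1..x_n are indexed by 0..n-1. A literal is a pair (i, b):
  (i, True) is x_i and (i, False) is its negation. An assignment of the n
  variables is the set of indices of the variables set to true (a subset of
  {..<n}); a Boolean function of n variables is its set of true points.\<close>

type_synonym lit = "nat \<times> bool"

definition lit_val :: "nat set \<Rightarrow> lit \<Rightarrow> bool" where
  "lit_val A l = ((fst l \<in> A) = snd l)"

definition is_kclause :: "nat \<Rightarrow> nat \<Rightarrow> lit set \<Rightarrow> bool" where
  "is_kclause n k C \<longleftrightarrow> card C = k \<and> inj_on fst C \<and> fst ` C \<subseteq> {..<n}"

definition clause_sat :: "nat set \<Rightarrow> lit set \<Rightarrow> bool" where
  "clause_sat A C \<longleftrightarrow> (\<forall>l\<in>C. lit_val A l)"

definition formula_fun :: "nat \<Rightarrow> lit set set \<Rightarrow> nat set set" where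
  "formula_fun n F = {A \<in> Pow {..<n}. \<exists>C\<in>F. clause_sat A C}"

definition is_kSAT_formula :: "nat \<Rightarrow> nat \<Rightarrow> lit set set \<Rightarrow> bool" where
  "is_kSAT_formula n k F \<longleftrightarrow> F \<noteq> {} \<and> (\<forall>C\<in>F. is_kclause n k C)"

definition kSAT_functions :: "nat \<Rightarrow> nat \<Rightarrow> nat set set set" where
  "kSAT_functions k n = {formula_fun n F | F. is_kSAT_formula n k F}"

definition G :: "nat \<Rightarrow> nat \<Rightarrow> nat" where
  "G k n = card (kSAT_functions k n)"

definition admissible :: "nat \<Rightarrow> nat \<Rightarrow> (nat \<Rightarrow> bool) \<Rightarrow> lit set set \<Rightarrow> bool" where
  "admissible k n s F \<longleftrightarrow> F \<noteq> {} \<and>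
     (\<forall>C\<in>F. is_kclause n k C \<and> C \<subseteq> {(i, s i) | i. i < n}) \<and>
     (\<forall>i<n. \<exists>C\<in>F. (i, s i) \<in> C)"

end

theory Submission
  imports Defs
begin

(* Fix signs s, i.e. literals y_i = (i, s i).  A clause built from the y_i is
   determined by its set I of variables, and we write it as signed_clause s I.  The
   "signed assignment" signed_asg n s J makes y_i true exactly for i in J, and it satisfies
   signed_clause s I iff I is a subset of J.  Evaluating a formula at these assignments
   recovers everything:
   - the signs: if s i differs from s' i, take a clause of F containing y_i with variable set
     I; then F is true at signed_asg n s I but false at signed_asg n s (I - {i}), whereas
     every formula over the literals (i, s' i) takes equal values at these two points;
   - the clause set: for fixed s, the k-sets I with signed_clause s I in F are exactly the
     minimal J with signed_asg n s J a true point.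
   Hence the map (s, F) to formula_fun n F is injective into the k-SAT functions.  Finally a
   union bound shows that for each of the 2^n sign vectors there are more than
   2^C(n,k) - n 2^C(n-1,k) admissible clause sets, which gives the lower bound on G k n. *)

definition signed_clause :: "(nat \<Rightarrow> bool) \<Rightarrow> nat set \<Rightarrow> lit set" where
  "signed_clause s I = (\<lambda>i. (i, s i)) ` I"

definition signed_clauses :: "nat \<Rightarrow> (nat \<Rightarrow> bool) \<Rightarrow> nat set \<Rightarrow> lit set set" where
  "signed_clauses k s S = signed_clause s ` {I. I \<subseteq> S \<and> card I = k}"

definition signed_asg :: "nat \<Rightarrow> (nat \<Rightarrow> bool) \<Rightarrow> nat set \<Rightarrow> nat set" where
  "signed_asg n s J = {i. i < n \<and> (i \<in> J) = s i}"

lemma fst_signed_clause [simp]: "fst ` signed_clause s I = I"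
  unfolding signed_clause_def by force

lemma inj_signed_clause: "inj (signed_clause s)"
  by (rule injI) (metis fst_signed_clause)

lemma card_signed_clause: "card (signed_clause s I) = card I"
  unfolding signed_clause_def by (rule card_image) (auto simp: inj_on_def)

lemma signed_literals: "{(i, s i) | i. i < n} = signed_clause s {..<n}"
  unfolding signed_clause_def by auto

lemma subset_signed_clause:
  "C \<subseteq> signed_clause s S \<Longrightarrow> C = signed_clause s (fst ` C)"
  unfolding signed_clause_def by force

lemma signed_asg_Pow: "signed_asg n s J \<in> Pow {..<n}"
  unfolding signed_asg_def by auto

lemma clause_sat_signed_asg:
  assumes "I \<subseteq> {..<n}"
  shows "clause_sat (signed_asg n s J) (signed_clause s I) \<longleftrightarrow> I \<subseteq> J"
  using assms unfolding clause_sat_def lit_val_def signed_asg_def signed_clause_def by auto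

lemma clause_sat_local:
  assumes "\<forall>j\<in>fst ` C. j \<in> A \<longleftrightarrow> j \<in> B"
  shows "clause_sat A C \<longleftrightarrow> clause_sat B C"
  using assms unfolding clause_sat_def lit_val_def by force

lemma signed_clauses_iff:
  "C \<in> signed_clauses k s S \<longleftrightarrow> C \<subseteq> signed_clause s S \<and> card C = k"
proof
  assume "C \<in> signed_clauses k s S"
  then obtain I where "C = signed_clause s I" "I \<subseteq> S" "card I = k"
    unfolding signed_clauses_def by blast
  then show "C \<subseteq> signed_clause s S \<and> card C = k"
    using card_signed_clause by (auto simp: signed_clause_def)
next
  assume C: "C \<subseteq> signed_clause s S \<and> card C = k"
  then have "C = signed_clause s (fst ` C)"
    using subset_signed_clause by blast
  moreover have "fst ` C \<subseteq> S"
    using C image_mono[of C "signed_clause s S" fst] by simp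
  ultimately show "C \<in> signed_clauses k s S"
    unfolding signed_clauses_def using C card_signed_clause by (metis (mono_tags, lifting) image_eqI mem_Collect_eq)
qed

(* Sets of signed literals are automatically injective on variables, so being a k-clause
   reduces to a cardinality condition. *)
lemma kclause_signed_iff:
  "is_kclause n k C \<and> C \<subseteq> signed_clause s {..<n} \<longleftrightarrow> C \<in> signed_clauses k s {..<n}"
proof -
  have "inj_on fst (signed_clause s {..<n})"
    unfolding signed_clause_def by (rule inj_onI) auto
  then have "inj_on fst C \<and> fst ` C \<subseteq> {..<n}" if "C \<subseteq> signed_clause s {..<n}"
    using that inj_on_subset image_mono[OF that, of fst] by fastforce
  then show ?thesis
    unfolding is_kclause_def signed_clauses_iff by blast
qed

lemma admissible_iff:
  "admissible k n s F \<longleftrightarrow>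
     F \<noteq> {} \<and> F \<subseteq> signed_clauses k s {..<n} \<and> (\<forall>i<n. \<exists>C\<in>F. (i, s i) \<in> C)"
  unfolding admissible_def signed_literals kclause_signed_iff by blast

lemma finite_signed_clauses: "finite S \<Longrightarrow> finite (signed_clauses k s S)"
  unfolding signed_clauses_def by simp

lemma card_signed_clauses: "finite S \<Longrightarrow> card (signed_clauses k s S) = card S choose k"
  unfolding signed_clauses_def
  by (simp add: card_image inj_on_subset[OF inj_signed_clause] n_subsets)

lemma formula_fun_signed_asg:
  assumes "F \<subseteq> signed_clauses k s {..<n}"
  shows "signed_asg n s J \<in> formula_fun n F \<longleftrightarrow> (\<exists>I \<subseteq> J. signed_clause s I \<in> F)"
proof -
  have "clause_sat (signed_asg n s J) C \<longleftrightarrow> fst ` C \<subseteq> J" if C: "C \<in> F" for C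
  proof -
    obtain I where "C = signed_clause s I" "I \<subseteq> {..<n}"
      using assms C unfolding signed_clauses_def by blast
    then show ?thesis by (simp add: clause_sat_signed_asg)
  qed
  then have "signed_asg n s J \<in> formula_fun n F \<longleftrightarrow> (\<exists>C\<in>F. fst ` C \<subseteq> J)"
    unfolding formula_fun_def using signed_asg_Pow by (simp cong: bex_cong)
  also have "\<dots> \<longleftrightarrow> (\<exists>I \<subseteq> J. signed_clause s I \<in> F)"
  proof
    assume "\<exists>C\<in>F. fst ` C \<subseteq> J"
    then obtain C where C: "C \<in> F" "fst ` C \<subseteq> J" by blast
    then have "C \<subseteq> signed_clause s {..<n}"
      using assms signed_clauses_iff by blast
    then have "C = signed_clause s (fst ` C)"
      by (rule subset_signed_clause)
    then show "\<exists>I \<subseteq> J. signed_clause s I \<in> F"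
      using C by (intro exI[of _ "fst ` C"]) simp
  next
    assume "\<exists>I \<subseteq> J. signed_clause s I \<in> F"
    then show "\<exists>C\<in>F. fst ` C \<subseteq> J" by (metis fst_signed_clause)
  qed
  finally show ?thesis .
qed

lemma formula_fun_determines_clauses:
  assumes F: "F \<subseteq> signed_clauses k s {..<n}" and F': "F' \<subseteq> signed_clauses k s {..<n}"
    and eq: "formula_fun n F = formula_fun n F'"
  shows "F \<subseteq> F'"
proof
  fix C assume "C \<in> F"
  then obtain I where C: "C = signed_clause s I" "I \<subseteq> {..<n}" "card I = k" "C \<in> F"
    using F unfolding signed_clauses_def by blast
  then have "signed_asg n s I \<in> formula_fun n F'"
    using formula_fun_signed_asg[OF F] eq by blast
  then obtain I' where I': "I' \<subseteq> I" "signed_clause s I' \<in> F'"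
    using formula_fun_signed_asg[OF F'] by blast
  then have "card I' = k"
    using F' signed_clauses_iff card_signed_clause by (metis subsetD)
  then have "I' = I"
    using card_subset_eq[OF finite_subset[OF C(2) finite_lessThan] I'(1)] C(3) by simp
  then show "C \<in> F'" using I' C by simp
qed

lemma mem_signed_asg: "i < n \<Longrightarrow> i \<in> signed_asg n s J \<longleftrightarrow> (i \<in> J) = s i"
  unfolding signed_asg_def by simp

lemma formula_fun_determines_sign:
  assumes k: "k \<ge> 1" and i: "i < n"
    and F: "F \<subseteq> signed_clauses k s {..<n}" and C: "C \<in> F" "(i, s i) \<in> C"
    and F': "F' \<subseteq> signed_clauses k s' {..<n}"
    and eq: "formula_fun n F = formula_fun n F'"
  shows "s i = s' i"
proof (rule ccontr)
  assume sign: "s i \<noteq> s' i"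
  obtain I where I: "C = signed_clause s I" "I \<subseteq> {..<n}" "card I = k"
    using F C unfolding signed_clauses_def by blast
  have iI: "i \<in> I"
    using C(2) I(1) image_eqI[of i fst "(i, s i)" C] by simp
  define A1 where "A1 = signed_asg n s I"
  define A0 where "A0 = signed_asg n s (I - {i})"
  \<comment> \<open>F is true at A1 but false at A0, since I - {i} contains no k-set.\<close>
  have "A1 \<in> formula_fun n F"
    using formula_fun_signed_asg[OF F] C I unfolding A1_def by blast
  moreover have "A0 \<notin> formula_fun n F"
  proof
    assume "A0 \<in> formula_fun n F"
    then obtain I' where I': "I' \<subseteq> I - {i}" "signed_clause s I' \<in> F"
      using formula_fun_signed_asg[OF F] unfolding A0_def by blast
    then have "card I' = k"
      using F signed_clauses_iff card_signed_clause by (metis subsetD)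
    moreover have "card I' \<le> card (I - {i})"
      using I' I(2) by (meson card_mono finite_Diff finite_lessThan finite_subset)
    ultimately show False
      using card_Diff_singleton[OF iI] I(3) k by simp
  qed
  \<comment> \<open>A clause of F' true at A1 avoids the variable i, where A1 falsifies (i, s' i);
    so it is also true at A0.\<close>
  moreover have "A0 \<in> formula_fun n F'" if A1: "A1 \<in> formula_fun n F'"
  proof -
    obtain C' where C': "C' \<in> F'" "clause_sat A1 C'"
      using A1 unfolding formula_fun_def by blast
    have C'_signed: "C' \<subseteq> signed_clause s' {..<n}"
      using F' C'(1) signed_clauses_iff by blast
    have "i \<notin> fst ` C'"
    proof
      assume "i \<in> fst ` C'"
      then have "(i, s' i) \<in> C'"
        using C'_signed unfolding signed_clause_def by force
      then have "(i \<in> A1) = s' i"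
        using C'(2) unfolding clause_sat_def lit_val_def by auto
      then show False
        using sign iI i mem_signed_asg unfolding A1_def by blast
    qed
    then have "\<forall>j\<in>fst ` C'. j \<in> A0 \<longleftrightarrow> j \<in> A1"
      unfolding A0_def A1_def signed_asg_def by auto
    then have "clause_sat A0 C'"
      using C'(2) clause_sat_local by blast
    then show ?thesis
      using C'(1) signed_asg_Pow unfolding formula_fun_def A0_def by blast
  qed
  ultimately show False using eq by blast
qed

lemma admissible_inj:
  assumes "k \<ge> 1"
  shows "inj_on (\<lambda>(s, F). formula_fun n F)
           {(s, F). s \<in> {..<n} \<rightarrow>\<^sub>E (UNIV :: bool set) \<and> admissible k n s F}"
proof (rule inj_onI, clarsimp)
  fix s s' F F'
  assume s: "s \<in> {..<n} \<rightarrow>\<^sub>E (UNIV :: bool set)" and s': "s' \<in> {..<n} \<rightarrow>\<^sub>E (UNIV :: bool set)"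
    and adm: "admissible k n s F" and adm': "admissible k n s' F'"
    and eq: "formula_fun n F = formula_fun n F'"
  have F: "F \<subseteq> signed_clauses k s {..<n}" and F': "F' \<subseteq> signed_clauses k s' {..<n}"
    using adm adm' admissible_iff by blast+
  have occurs: "\<forall>i<n. \<exists>C\<in>F. (i, s i) \<in> C"
    using adm unfolding admissible_def by simp
  have "s i = s' i" if i: "i < n" for i
  proof -
    obtain C where C: "C \<in> F" "(i, s i) \<in> C"
      using occurs i by blast
    show ?thesis
      using formula_fun_determines_sign[OF assms i F C F' eq] .
  qed
  then have "s = s'"
    using s s' by (intro extensionalityI[of _ "{..<n}"]) (auto simp: PiE_iff)
  then have "F = F'"
    using formula_fun_determines_clauses F F' eq by blast
  then show "s = s' \<and> F = F'" using \<open>s = s'\<close> by simp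
qed

lemma admissible_kSAT: "admissible k n s F \<Longrightarrow> formula_fun n F \<in> kSAT_functions k n"
  unfolding kSAT_functions_def is_kSAT_formula_def admissible_def by blast

lemma finite_kSAT_functions: "finite (kSAT_functions k n)"
proof -
  have "kSAT_functions k n \<subseteq> Pow (Pow {..<n})"
    unfolding kSAT_functions_def formula_fun_def by auto
  then show ?thesis using finite_subset by blast
qed

lemma finite_admissible: "finite {F. admissible k n s F}"
proof (rule finite_subset)
  show "{F. admissible k n s F} \<subseteq> Pow (signed_clauses k s {..<n})"
    using admissible_iff by blast
qed (simp add: finite_signed_clauses)

lemma nonempty_clause_sets_cover:
  "Pow (signed_clauses k s {..<n}) - {{}} \<subseteq>
     {F. admissible k n s F} \<union> (\<Union>i<n. Pow (signed_clauses k s ({..<n} - {i})) - {{}})"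
proof
  fix F assume F: "F \<in> Pow (signed_clauses k s {..<n}) - {{}}"
  show "F \<in> {F. admissible k n s F} \<union> (\<Union>i<n. Pow (signed_clauses k s ({..<n} - {i})) - {{}})"
  proof (cases "\<forall>i<n. \<exists>C\<in>F. (i, s i) \<in> C")
    case True
    then have "admissible k n s F"
      unfolding admissible_iff using F by blast
    then show ?thesis by blast
  next
    case False
    then obtain i where i: "i < n" "\<forall>C\<in>F. (i, s i) \<notin> C" by blast
    have "F \<subseteq> signed_clauses k s ({..<n} - {i})"
    proof
      fix C assume "C \<in> F"
      then obtain I where I: "C = signed_clause s I" "I \<subseteq> {..<n}" "card I = k"
        using F unfolding signed_clauses_def by blast
      have "i \<notin> I"
      proof
        assume "i \<in> I"
        then have "(i, s i) \<in> C" unfolding I(1) signed_clause_def by (rule imageI)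
        then show False using i(2) \<open>C \<in> F\<close> by blast
      qed
      then show "C \<in> signed_clauses k s ({..<n} - {i})"
        unfolding signed_clauses_def using I by (intro image_eqI[of _ _ I]) auto
    qed
    then show ?thesis using F i(1) by blast
  qed
qed

(* Union bound: at least 2^C(n,k) - 1 - n (2^C(n-1,k) - 1) admissible clause sets. *)
lemma card_admissible_lower:
  assumes "n \<ge> 2"
  shows "int (card {F. admissible k n s F}) \<ge> 2 ^ (n choose k) - int n * 2 ^ ((n - 1) choose k) + 1"
proof -
  define Ad where "Ad = {F. admissible k n s F}"
  define M where "M i = Pow (signed_clauses k s ({..<n} - {i})) - {{}}" for i
  have card_M: "card (M i) = 2 ^ ((n - 1) choose k) - 1" if "i < n" for i
    using that unfolding M_def
    by (simp add: card_Diff_singleton card_Pow finite_signed_clauses card_signed_clauses)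
  have "2 ^ (n choose k) - 1 = card (Pow (signed_clauses k s {..<n}) - {{}})"
    by (simp add: card_Diff_singleton card_Pow finite_signed_clauses card_signed_clauses)
  also have "\<dots> \<le> card (Ad \<union> (\<Union>i<n. M i))"
    using nonempty_clause_sets_cover finite_admissible
    by (intro card_mono) (auto simp: Ad_def M_def finite_signed_clauses)
  also have "\<dots> \<le> card Ad + card (\<Union>i<n. M i)" by (rule card_Un_le)
  also have "card (\<Union>i<n. M i) \<le> (\<Sum>i<n. card (M i))" by (rule card_UN_le) simp
  also have "(\<Sum>i<n. card (M i)) = n * (2 ^ ((n - 1) choose k) - 1)" using card_M by simp
  finally have "2 ^ (n choose k) - 1 \<le> card Ad + n * (2 ^ ((n - 1) choose k) - 1)"
    by simp
  then have "int (2 ^ (n choose k) - 1) \<le> int (card Ad + n * (2 ^ ((n - 1) choose k) - 1))"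
    by linarith
  then have "2 ^ (n choose k) - 1 \<le> int (card Ad) + int n * (2 ^ ((n - 1) choose k) - 1)"
    by (simp add: of_nat_diff)
  then show ?thesis unfolding Ad_def using assms by (simp add: algebra_simps)
qed

lemma card_admissible_pairs_lower:
  assumes "n \<ge> 2"
  shows "int (card {(s, F). s \<in> {..<n} \<rightarrow>\<^sub>E (UNIV :: bool set) \<and> admissible k n s F})
           \<ge> 2 ^ n * (2 ^ (n choose k) - int n * 2 ^ ((n - 1) choose k) + 1)"
proof -
  define Signs where "Signs = {..<n} \<rightarrow>\<^sub>E (UNIV :: bool set)"
  have "{(s, F). s \<in> Signs \<and> admissible k n s F} = Sigma Signs (\<lambda>s. {F. admissible k n s F})"
    by auto
  then have "int (card {(s, F). s \<in> Signs \<and> admissible k n s F})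
               = (\<Sum>s\<in>Signs. int (card {F. admissible k n s F}))"
    by (simp add: Signs_def finite_PiE finite_admissible)
  also have "\<dots> \<ge> (\<Sum>s\<in>Signs. 2 ^ (n choose k) - int n * 2 ^ ((n - 1) choose k) + 1)"
    using card_admissible_lower[OF assms] by (intro sum_mono) simp
  finally show ?thesis
    by (simp add: Signs_def card_PiE)
qed

lemma card_admissible_pairs_le_G:
  assumes "k \<ge> 1"
  shows "card {(s, F). s \<in> {..<n} \<rightarrow>\<^sub>E (UNIV :: bool set) \<and> admissible k n s F} \<le> G k n"
    (is "card ?Pairs \<le> _")
proof -
  have "(\<lambda>(s, F). formula_fun n F) ` ?Pairs \<subseteq> kSAT_functions k n"
    using admissible_kSAT by fast
  then have "card ((\<lambda>(s, F). formula_fun n F) ` ?Pairs) \<le> G k n"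
    unfolding G_def by (rule card_mono[OF finite_kSAT_functions])
  then show ?thesis
    using card_image[OF admissible_inj[OF assms]] by simp
qed

theorem mainTheorem3:
  fixes k n :: nat
  assumes "k \<ge> 1" and "n \<ge> max k 2"
  shows "int (G k n) > 2 ^ n * (2 ^ (n choose k) - int n * 2 ^ ((n - 1) choose k))
    \<and> (\<forall>s F. s \<in> {..<n} \<rightarrow>\<^sub>E (UNIV :: bool set) \<and> admissible k n s F
           \<longrightarrow> formula_fun n F \<in> kSAT_functions k n)
    \<and> inj_on (\<lambda>(s, F). formula_fun n F)
        {(s, F). s \<in> {..<n} \<rightarrow>\<^sub>E (UNIV :: bool set) \<and> admissible k n s F}"
proof -
  define X :: int where "X = 2 ^ (n choose k) - int n * 2 ^ ((n - 1) choose k)"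
  have "2 ^ n * (X + 1) \<le> int (G k n)"
    using card_admissible_pairs_lower[of n k] card_admissible_pairs_le_G[OF assms(1), of n] assms(2)
    unfolding X_def by linarith
  moreover have "2 ^ n * X < 2 ^ n * (X + 1)" by simp
  ultimately have "int (G k n) > 2 ^ n * X" by linarith
  then show ?thesis
    unfolding X_def using admissible_kSAT admissible_inj[OF assms(1)] by (intro conjI allI impI) auto
qed

end
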